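(* For every integer $m\ge 0$ and every integer $n\ge 2$, the polynomials $l_n(x,m,s)$ satisfy $$l_n(x,m,s)=x\,l_{n-1}(x,m,s)+s\,\lambda_{n-2}(m)\,l_{n-2}(x,m,s),$$ where $\lambda_0(m)=\frac{2}{m+1}$ and $\lambda_n(m)=\frac{(n+1)(n+2m)}{(n+m)(n+m+1)}$ for $n\ge 1$.
   Context: For an integer $m\ge 0$ and indeterminates $x,s$, define $$l_n(x,m,s)=\sum_{k=0}^{\lfloor n/2\rfloor}\frac{n!}{k!\,(n-2k)!}\,\frac{1}{\prod_{j=1}^{k}(m+n-j)}\,s^k x^{n-2k}\qquad(n\ge 0),$$ with empty products equal to $1$ (so $l_0=1$, $l_1=x$). *)

theory Defs
  imports Complex_Main
begin

definition l_poly :: "nat \<Rightarrow> 'a::field_char_0 \<Rightarrow> nat \<Rightarrow> 'a \<Rightarrow> 'a" where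
  "l_poly n x m s = (\<Sum>k = 0..n div 2.
     (of_nat (fact n) / (of_nat (fact k) * of_nat (fact (n - 2*k))))
     * (1 / (\<Prod>j = 1..k. of_nat (m + n - j)))
     * s ^ k * x ^ (n - 2*k))"

definition lambda_coeff :: "nat \<Rightarrow> nat \<Rightarrow> 'a::field_char_0" where
  "lambda_coeff n m = (if n = 0 then 2 / (of_nat m + 1)
     else (of_nat (n+1) * of_nat (n + 2*m)) / (of_nat (n+m) * of_nat (n+m+1)))"

end

theory Submission
  imports Defs
begin

(* Write l_n = sum_k c(n,k) s^k x^(n-2k), where
     c(n,k) = n! / (k! (n-2k)! D(n,k)),   D(n,k) = prod_{j=1..k} (m+n-j),
   and c(n,k) = 0 for 2k > n.  Comparing coefficients of s^(k+1) x^(n-2k), the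
   recurrence for l_(n+2) amounts to the coefficient identity
     c(n+2,k+1) = c(n+1,k+1) + lambda_n(m) c(n,k).
   The product rules D(n+1,k+1) = (m+n) D(n,k) and D(n,k+1) = D(n,k) (m+n-k-1)
   express both summands on the right as rational multiples of c(n+2,k+1):
     (n+2)(m+n-k) c(n+1,k+1)        = (n-2k)(m+n+1) c(n+2,k+1),
     (n+2)(m+n-k) lambda_n c(n,k)   = (k+1)(n+2m)   c(n+2,k+1)     (n >= 1),
   and the two multipliers add up to (n+2)(m+n-k).  The case n = 0, where
   lambda_0 is given by a separate formula, is checked directly.  The theorem
   then follows by splitting off the k = 0 term of the sum for l_(n+2) and
   applying the coefficient identity termwise. *)

definition l_denom :: "nat \<Rightarrow> nat \<Rightarrow> nat \<Rightarrow> 'a::field_char_0" where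
  "l_denom m n k = (\<Prod>j = 1..k. of_nat (m + n - j))"

definition l_coeff :: "nat \<Rightarrow> nat \<Rightarrow> nat \<Rightarrow> 'a::field_char_0" where
  "l_coeff m n k =
     (if 2*k \<le> n then fact n / (fact k * fact (n - 2*k) * l_denom m n k) else 0)"

lemma l_denom_Suc:
  "(l_denom m n (Suc k) :: 'a::field_char_0) = l_denom m n k * of_nat (m + n - Suc k)"
  by (simp add: l_denom_def)

lemma l_denom_Suc_Suc:
  "(l_denom m (Suc n) (Suc k) :: 'a::field_char_0) = of_nat (m + n) * l_denom m n k"
proof (induction k)
  case 0
  then show ?case by (simp add: l_denom_def)
next
  case (Suc k)
  then show ?case by (simp add: l_denom_Suc)
qed

lemma l_denom_nonzero: "k < m + n \<Longrightarrow> (l_denom m n k :: 'a::field_char_0) \<noteq> 0"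
  by (auto simp: l_denom_def simp del: of_nat_add)

lemma l_coeff_0 [simp]: "l_coeff m n 0 = 1"
  by (simp add: l_coeff_def l_denom_def)

definition l_term :: "'a::field_char_0 \<Rightarrow> 'a \<Rightarrow> nat \<Rightarrow> nat \<Rightarrow> nat \<Rightarrow> 'a" where
  "l_term x s m n k = l_coeff m n k * s ^ k * x ^ (n - 2*k)"

lemma l_poly_as_sum:
  assumes "n \<le> M"
  shows "l_poly n x m s = (\<Sum>k\<le>M. l_term x s m n k)"
proof -
  have "l_poly n x m s = (\<Sum>k = 0..n div 2. l_term x s m n k)"
    unfolding l_poly_def l_term_def l_coeff_def l_denom_def
    by (rule sum.cong) auto
  also have "\<dots> = (\<Sum>k\<le>M. l_term x s m n k)"
    by (rule sum.mono_neutral_left) (use assms in \<open>auto simp: l_term_def l_coeff_def\<close>)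
  finally show ?thesis .
qed

lemma l_coeff_ratio_shift:
  assumes "2*k \<le> n"
  shows "of_nat ((n+2) * (m+n-k)) * (l_coeff m (n+1) (k+1) :: 'a::field_char_0)
       = of_nat ((n-2*k) * (m+n+1)) * l_coeff m (n+2) (k+1)"
proof (cases "n = 2*k")
  case True
  then show ?thesis by (simp add: l_coeff_def)
next
  case False
  with assms obtain e where e: "n - 2*k = Suc e"
    by (metis Suc_diff_Suc le_neq_implies_less mult_2)
  define A :: 'a where "A = l_denom m (n+1) k"
  define P :: 'a where "P = of_nat (m+n-k)"
  define Q :: 'a where "Q = of_nat (m+n+1)"
  have "A \<noteq> 0" unfolding A_def by (rule l_denom_nonzero) (use assms in simp)
  have "P \<noteq> 0" unfolding P_def of_nat_eq_0_iff using e by simp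
  have "Q \<noteq> 0" unfolding Q_def of_nat_eq_0_iff by simp
  have "l_denom m (n+1) (k+1) = A * P"
    by (simp add: A_def P_def l_denom_Suc)
  moreover have "2*(k+1) \<le> n + 1" "n + 1 - 2*(k+1) = e" using e by simp_all
  ultimately have c1: "l_coeff m (n+1) (k+1) = fact (n+1) / (fact (k+1) * fact e * (A * P))"
    by (simp add: l_coeff_def)
  have "l_denom m (n+2) (k+1) = Q * A"
    using l_denom_Suc_Suc[of m "n+1" k] by (simp add: A_def Q_def)
  moreover have "2*(k+1) \<le> n + 2" "n + 2 - 2*(k+1) = Suc e" using e by simp_all
  ultimately have c2: "l_coeff m (n+2) (k+1) = fact (n+2) / (fact (k+1) * fact (Suc e) * (Q * A))"
    by (simp add: l_coeff_def)
  have facts: "fact (n+2) = of_nat (n+2) * (fact (n+1) :: 'a)"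
    "fact (Suc e) = of_nat (Suc e) * (fact e :: 'a)"
    by (simp_all add: fact_Suc del: of_nat_Suc)
  have factors: "of_nat ((n+2) * (m+n-k)) = of_nat (n+2) * P"
    "of_nat ((n-2*k) * (m+n+1)) = of_nat (Suc e) * Q"
    unfolding P_def Q_def e of_nat_mult by simp_all
  have "(of_nat (Suc e) :: 'a) \<noteq> 0" by (simp del: of_nat_Suc)
  then have "N * P * (F / (K * E * (A * P)))
      = of_nat (Suc e) * Q * (N * F / (K * (of_nat (Suc e) * E) * (Q * A)))"
    for N F K E :: 'a
    using \<open>A \<noteq> 0\<close> \<open>P \<noteq> 0\<close> \<open>Q \<noteq> 0\<close> by (simp add: field_simps del: of_nat_Suc)
  then show ?thesis unfolding c1 c2 facts factors .
qed

(* This is where the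
   formula for lambda_n (n >= 1) enters: its denominator (n+m)(n+m+1) matches the
   factors by which D(n+2,k+1) exceeds D(n,k). *)
lemma l_coeff_ratio_lambda:
  assumes "1 \<le> n" "2*k \<le> n"
  shows "of_nat ((n+2) * (m+n-k)) * (lambda_coeff n m * l_coeff m n k :: 'a::field_char_0)
       = of_nat ((k+1) * (n+2*m)) * l_coeff m (n+2) (k+1)"
proof -
  define A :: 'a where "A = l_denom m (n+1) k"
  define P :: 'a where "P = of_nat (m+n-k)"
  define Q :: 'a where "Q = of_nat (n+m+1)"
  define M :: 'a where "M = of_nat (n+m)"
  have "A \<noteq> 0" unfolding A_def by (rule l_denom_nonzero) (use assms in simp)
  have "P \<noteq> 0" unfolding P_def of_nat_eq_0_iff using assms by simp
  have "Q \<noteq> 0" unfolding Q_def of_nat_eq_0_iff by simp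
  have "M \<noteq> 0" unfolding M_def of_nat_eq_0_iff using assms by simp
  have "M * l_denom m n k = l_denom m (n+1) (k+1)"
    by (simp add: M_def l_denom_Suc_Suc add.commute)
  also have "\<dots> = A * P"
    by (simp add: A_def P_def l_denom_Suc)
  finally have "l_denom m n k = A * P / M"
    using \<open>M \<noteq> 0\<close> by (simp add: eq_divide_eq ac_simps)
  with assms have c0: "l_coeff m n k = fact n / (fact k * fact (n-2*k) * (A * P / M))"
    by (simp add: l_coeff_def)
  have lambda: "lambda_coeff n m = of_nat (n+1) * of_nat (n+2*m) / (M * Q)"
    using assms by (simp add: lambda_coeff_def M_def Q_def)
  have "l_denom m (n+2) (k+1) = Q * A"
    using l_denom_Suc_Suc[of m "n+1" k] by (simp add: A_def Q_def add.commute)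
  moreover have "2*(k+1) \<le> n + 2" "n + 2 - 2*(k+1) = n - 2*k" using assms by simp_all
  ultimately have c2: "l_coeff m (n+2) (k+1) = fact (n+2) / (fact (k+1) * fact (n-2*k) * (Q * A))"
    by (simp add: l_coeff_def)
  have facts: "fact (n+2) = of_nat (n+2) * (of_nat (n+1) * (fact n :: 'a))"
    "fact (k+1) = of_nat (k+1) * (fact k :: 'a)"
    by (simp_all add: fact_Suc del: of_nat_Suc)
  have factors: "of_nat ((n+2) * (m+n-k)) = of_nat (n+2) * P"
    "of_nat ((k+1) * (n+2*m)) = of_nat (k+1) * (of_nat (n+2*m) :: 'a)"
    unfolding P_def of_nat_mult by simp_all
  have "(of_nat (k+1) :: 'a) \<noteq> 0" by (simp del: of_nat_Suc)
  then have "N2 * P * (N1 * B / (M * Q) * (F / (K * E * (A * P / M))))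
      = of_nat (k+1) * B * (N2 * (N1 * F) / (of_nat (k+1) * K * E * (Q * A)))"
    for N2 N1 B F K E :: 'a
    using \<open>A \<noteq> 0\<close> \<open>P \<noteq> 0\<close> \<open>Q \<noteq> 0\<close> \<open>M \<noteq> 0\<close>
    by (simp add: field_simps del: of_nat_Suc)
  then show ?thesis unfolding lambda c0 c2 factors facts .
qed

lemma ratio_multipliers_sum:
  assumes "2*k \<le> (n::nat)"
  shows "(n-2*k) * (m+n+1) + (k+1) * (n+2*m) = (n+2) * (m+n-k)"
proof -
  obtain d where "n = 2*k + d" using assms le_Suc_ex by blast
  then show ?thesis by (simp add: algebra_simps)
qed

lemma l_coeff_rec:
  "(l_coeff m (n+2) (k+1) :: 'a::field_char_0)
     = l_coeff m (n+1) (k+1) + lambda_coeff n m * l_coeff m n k"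
proof -
  consider "n < 2*k" | "n = 0" "k = 0" | "1 \<le> n" "2*k \<le> n" by linarith
  then show ?thesis
  proof cases
    case 1
    then show ?thesis by (simp add: l_coeff_def)
  next
    case 2
    then show ?thesis by (simp add: l_coeff_def l_denom_def lambda_coeff_def add.commute)
  next
    case 3
    define W :: 'a where "W = of_nat ((n+2) * (m+n-k))"
    have "W \<noteq> 0" unfolding W_def of_nat_eq_0_iff using 3 by simp
    have "W * (l_coeff m (n+1) (k+1) + lambda_coeff n m * l_coeff m n k)
        = of_nat ((n-2*k) * (m+n+1) + (k+1) * (n+2*m)) * l_coeff m (n+2) (k+1)"
      unfolding W_def distrib_left l_coeff_ratio_shift[OF 3(2)] l_coeff_ratio_lambda[OF 3]
      by (simp only: of_nat_add distrib_right)
    also have "\<dots> = W * l_coeff m (n+2) (k+1)"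
      unfolding W_def ratio_multipliers_sum[OF 3(2)] ..
    finally show ?thesis using \<open>W \<noteq> 0\<close> by simp
  qed
qed

(* x times the s^(k+1)-monomial of l_(n+1) is c(n+1,k+1) s^(k+1) x^(n-2k), the shape of
   the s^(k+1)-monomial of l_(n+2); when 2k = n the coefficient is zero and so are both sides. *)
lemma x_times_l_term:
  "x * l_term x s m (n+1) (k+1) = l_coeff m (n+1) (k+1) * s ^ (k+1) * x ^ (n - 2*k)"
proof (cases "2*k + 1 \<le> n")
  case True
  then have "n - 2*k = Suc (n + 1 - 2*(k+1))" by simp
  then show ?thesis by (simp add: l_term_def)
next
  case False
  then show ?thesis by (simp add: l_term_def l_coeff_def)
qed

lemma l_term_rec:
  "l_term x s m (n+2) (k+1)
     = x * l_term x s m (n+1) (k+1) + s * lambda_coeff n m * l_term x s m n k"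
proof -
  have "l_term x s m (n+2) (k+1)
      = (l_coeff m (n+1) (k+1) + lambda_coeff n m * l_coeff m n k) * s ^ (k+1) * x ^ (n - 2*k)"
    unfolding l_term_def l_coeff_rec by simp
  then show ?thesis
    unfolding x_times_l_term by (simp add: l_term_def algebra_simps)
qed

lemma l_term_0: "l_term x s m (n+1) 0 = x * l_term x s m n 0"
  by (simp add: l_term_def)

theorem mainTheorem3:
  fixes x s :: "'a::field_char_0" and m n :: nat
  assumes "n \<ge> 2"
  shows "l_poly n x m s = x * l_poly (n-1) x m s + s * lambda_coeff (n-2) m * l_poly (n-2) x m s"
proof -
  obtain N where n: "n = N + 2" using assms le_Suc_ex by (metis add.commute)
  let ?T = "l_term x s m" and ?lam = "lambda_coeff N m :: 'a"
  have "l_poly (N+2) x m s = (\<Sum>k\<le>Suc (N+1). ?T (N+2) k)"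
    by (rule l_poly_as_sum) simp
  also have "\<dots> = ?T (N+2) 0 + (\<Sum>k\<le>N+1. ?T (N+2) (k+1))"
    unfolding sum.atMost_Suc_shift by simp
  also have "\<dots> = x * ?T (N+1) 0 + (\<Sum>k\<le>N+1. x * ?T (N+1) (k+1) + s * ?lam * ?T N k)"
    unfolding l_term_rec using l_term_0[of x s m "N+1"] by simp
  also have "\<dots> = x * (?T (N+1) 0 + (\<Sum>k\<le>N+1. ?T (N+1) (k+1))) + s * ?lam * (\<Sum>k\<le>N+1. ?T N k)"
    by (simp add: sum.distrib sum_distrib_left algebra_simps)
  also have "?T (N+1) 0 + (\<Sum>k\<le>N+1. ?T (N+1) (k+1)) = l_poly (N+1) x m s"
    using l_poly_as_sum[of "N+1" "Suc (N+1)" x m s] unfolding sum.atMost_Suc_shift by simp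
  also have "(\<Sum>k\<le>N+1. ?T N k) = l_poly N x m s"
    by (rule l_poly_as_sum[symmetric]) simp
  finally show ?thesis unfolding n by simp
qed

end
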